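(* Let $A$ be a partial magma and $R$ an equivalence relation on $A$ in the category of partial magmas. Then $R$ is effective if and only if it is additive.
   Context: A partial magma is a set $A$ with a distinguished element $0$, a subset $A_2\subseteq A\times A$ of summable pairs and a map $+\colon A_2\to A$, such that $(0,a),(a,0)\in A_2$ and $a+0=0+a=a$ for all $a$, and $(a,b)\in A_2$ implies $(b,a)\in A_2$ and $a+b=b+a$. A homomorphism of partial magmas is a map $f$ with $f(0)=0$, $(f(a_1),f(a_2))\in B_2$ and $f(a_1+a_2)=f(a_1)+f(a_2)$ for $(a_1,a_2)\in A_2$. The product $A\times A$ is the partial magma in which $((a,b),(c,d))$ is summable iff $(a,c)\in A_2$ and $(b,d)\in A_2$, with componentwise sum. A partial submagma of a partial magma $C$ is a subset $D\ni 0$ with a set $D_2\subseteq C_2\cap(D\times D)$ containing all $(0,d),(d,0)$, closed under swapping, such that sums of pairs in $D_2$ lie in $D$. An equivalence relation on $A$ is a partial submagma $R$ of $A\times A$ such that for every partial magma $X$, the set of homomorphisms $X\to R$ is an equivalence relation on the set of homomorphisms $X\to A$ (via $\mathrm{Hom}(X,R)\subseteq \mathrm{Hom}(X,A)\times\mathrm{Hom}(X,A)$). $R$ is effective if there is a homomorphism $f\colon A\to B$ of partial magmas such that $R\rightrightarrows A$ is its kernel pair, i.e. $R=\{(a,a'):f(a)=f(a')\}$ and $R_2$ consists of all pairs of elements of $R$ that are summable in $A\times A$. $R$ is additive if $R_2=(R\times R)\cap(A\times A)_2$. *)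

theory Defs
  imports Main
begin

text \<open>A partial magma: carrier set, distinguished zero, set of summable pairs,
  and a sum operation (only meaningful on summable pairs).\<close>

record 'a pmagma =
  pm_carrier :: "'a set"
  pm_zero :: 'a
  pm_sums :: "('a \<times> 'a) set"
  pm_add :: "'a \<Rightarrow> 'a \<Rightarrow> 'a"

definition partial_magma :: "('a, 'm) pmagma_scheme \<Rightarrow> bool" where
  "partial_magma A \<longleftrightarrow>
     pm_zero A \<in> pm_carrier A \<and>
     pm_sums A \<subseteq> pm_carrier A \<times> pm_carrier A \<and>
     (\<forall>a\<in>pm_carrier A. (pm_zero A, a) \<in> pm_sums A \<and> (a, pm_zero A) \<in> pm_sums A \<and>
        pm_add A a (pm_zero A) = a \<and> pm_add A (pm_zero A) a = a) \<and>
     (\<forall>a b. (a, b) \<in> pm_sums A \<longrightarrow>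
        (b, a) \<in> pm_sums A \<and> pm_add A a b = pm_add A b a \<and> pm_add A a b \<in> pm_carrier A)"

definition pm_hom :: "('a, 'm) pmagma_scheme \<Rightarrow> ('b, 'n) pmagma_scheme \<Rightarrow> ('a \<Rightarrow> 'b) \<Rightarrow> bool" where
  "pm_hom A B f \<longleftrightarrow>
     (\<forall>a\<in>pm_carrier A. f a \<in> pm_carrier B) \<and>
     f (pm_zero A) = pm_zero B \<and>
     (\<forall>a1 a2. (a1, a2) \<in> pm_sums A \<longrightarrow>
        (f a1, f a2) \<in> pm_sums B \<and> f (pm_add A a1 a2) = pm_add B (f a1) (f a2))"

definition pm_square :: "('a, 'm) pmagma_scheme \<Rightarrow> ('a \<times> 'a) pmagma" where
  "pm_square A =
     \<lparr> pm_carrier = pm_carrier A \<times> pm_carrier A,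
       pm_zero = (pm_zero A, pm_zero A),
       pm_sums = {((a, b), (c, d)). (a, c) \<in> pm_sums A \<and> (b, d) \<in> pm_sums A},
       pm_add = (\<lambda>(a, b) (c, d). (pm_add A a c, pm_add A b d)) \<rparr>"

definition pm_sub :: "('c, 'm) pmagma_scheme \<Rightarrow> 'c set \<Rightarrow> ('c \<times> 'c) set \<Rightarrow> 'c pmagma" where
  "pm_sub C D D2 = \<lparr> pm_carrier = D, pm_zero = pm_zero C, pm_sums = D2, pm_add = pm_add C \<rparr>"

definition partial_submagma :: "('c, 'm) pmagma_scheme \<Rightarrow> 'c set \<Rightarrow> ('c \<times> 'c) set \<Rightarrow> bool" where
  "partial_submagma C D D2 \<longleftrightarrow>
     D \<subseteq> pm_carrier C \<and> pm_zero C \<in> D \<and>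
     D2 \<subseteq> pm_sums C \<inter> (D \<times> D) \<and>
     (\<forall>d\<in>D. (pm_zero C, d) \<in> D2 \<and> (d, pm_zero C) \<in> D2) \<and>
     (\<forall>x y. (x, y) \<in> D2 \<longrightarrow> (y, x) \<in> D2) \<and>
     (\<forall>x y. (x, y) \<in> D2 \<longrightarrow> pm_add C x y \<in> D)"

text \<open>For a test partial magma X, Hom(X,R) (viewed inside Hom(X,A) \<times> Hom(X,A) by
  pairing) is an equivalence relation on Hom(X,A).\<close>

definition hom_equiv_at :: "('x, 'n) pmagma_scheme \<Rightarrow> ('a, 'm) pmagma_scheme
    \<Rightarrow> ('a \<times> 'a) set \<Rightarrow> (('a \<times> 'a) \<times> ('a \<times> 'a)) set \<Rightarrow> bool" where
  "hom_equiv_at X A Rc R2 \<longleftrightarrow>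
     (let R = pm_sub (pm_square A) Rc R2;
          rel = (\<lambda>f g. pm_hom X R (\<lambda>x. (f x, g x)))
      in (\<forall>f. pm_hom X A f \<longrightarrow> rel f f) \<and>
         (\<forall>f g. pm_hom X A f \<longrightarrow> pm_hom X A g \<longrightarrow> rel f g \<longrightarrow> rel g f) \<and>
         (\<forall>f g h. pm_hom X A f \<longrightarrow> pm_hom X A g \<longrightarrow> pm_hom X A h \<longrightarrow>
              rel f g \<longrightarrow> rel g h \<longrightarrow> rel f h))"

text \<open>HOL cannot quantify
  over all types inside a formula, so the test objects X range over all partial
  magmas whose carrier lives in the countably infinite type nat.\<close>

definition pm_equivalence_relation :: "('a, 'm) pmagma_scheme \<Rightarrow> ('a \<times> 'a) set
    \<Rightarrow> (('a \<times> 'a) \<times> ('a \<times> 'a)) set \<Rightarrow> bool" where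
  "pm_equivalence_relation A Rc R2 \<longleftrightarrow>
     partial_submagma (pm_square A) Rc R2 \<and>
     (\<forall>X :: nat pmagma. partial_magma X \<longrightarrow> hom_equiv_at X A Rc R2)"

text \<open>Effectiveness: R is the kernel pair of some homomorphism f : A \<rightarrow> B, where B
  is a partial magma whose carrier lives in the type given by the first argument.\<close>

definition effective_in :: "'b itself \<Rightarrow> ('a, 'm) pmagma_scheme \<Rightarrow> ('a \<times> 'a) set
    \<Rightarrow> (('a \<times> 'a) \<times> ('a \<times> 'a)) set \<Rightarrow> bool" where
  "effective_in _ A Rc R2 \<longleftrightarrow>
     (\<exists>(B :: 'b pmagma) f. partial_magma B \<and> pm_hom A B f \<and>
        Rc = {(a, a'). a \<in> pm_carrier A \<and> a' \<in> pm_carrier A \<and> f a = f a'} \<and>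
        R2 = {(p, q). p \<in> Rc \<and> q \<in> Rc \<and> (p, q) \<in> pm_sums (pm_square A)})"

definition pm_additive :: "('a, 'm) pmagma_scheme \<Rightarrow> ('a \<times> 'a) set
    \<Rightarrow> (('a \<times> 'a) \<times> ('a \<times> 'a)) set \<Rightarrow> bool" where
  "pm_additive A Rc R2 \<longleftrightarrow> R2 = (Rc \<times> Rc) \<inter> pm_sums (pm_square A)"

end

theory Submission
  imports Defs
begin

text \<open>Testing the equivalence-relation property against the partial magma freely generated
  by one element shows that \<open>Rc\<close> is an equivalence relation on the carrier of \<open>A\<close>.
  Closure of \<open>Rc\<close> under the sums of \<open>R2\<close> makes it a congruence as soon as \<open>R2\<close> contains
  all summable pairs of \<open>Rc\<close>; then the classes form a quotient partial magma, in which two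
  classes are summable iff some representatives are, and the kernel pair of the quotient
  map is \<open>Rc\<close>.\<close>

text \<open>The partial magma freely generated by one element \<open>1\<close> (so \<open>1 + 1\<close> is undefined):
  homomorphisms out of it correspond to elements of the target.\<close>

definition pm_one_generator :: "nat pmagma" where
  "pm_one_generator =
     \<lparr> pm_carrier = {0, 1}, pm_zero = 0, pm_sums = {(0, 0), (0, 1), (1, 0)}, pm_add = (+) \<rparr>"

definition pm_element_hom :: "('a, 'm) pmagma_scheme \<Rightarrow> 'a \<Rightarrow> nat \<Rightarrow> 'a" where
  "pm_element_hom A a = (\<lambda>n. if n = 0 then pm_zero A else a)"

lemma partial_magma_one_generator: "partial_magma pm_one_generator"
  unfolding partial_magma_def pm_one_generator_def by auto

lemma pm_hom_element_hom:
  assumes "partial_magma A" "a \<in> pm_carrier A"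
  shows "pm_hom pm_one_generator A (pm_element_hom A a)"
  using assms unfolding pm_hom_def pm_one_generator_def pm_element_hom_def partial_magma_def
  by auto

lemma pm_hom_pair_element_hom_iff:
  assumes "partial_magma A" "partial_submagma (pm_square A) Rc R2"
  shows "pm_hom pm_one_generator (pm_sub (pm_square A) Rc R2)
           (\<lambda>n. (pm_element_hom A a n, pm_element_hom A b n)) \<longleftrightarrow> (a, b) \<in> Rc"
proof
  assume ab: "(a, b) \<in> Rc"
  have sub: "Rc \<subseteq> pm_carrier A \<times> pm_carrier A" "(pm_zero A, pm_zero A) \<in> Rc"
    "\<forall>d\<in>Rc. ((pm_zero A, pm_zero A), d) \<in> R2 \<and> (d, (pm_zero A, pm_zero A)) \<in> R2"
    using assms(2) unfolding partial_submagma_def pm_square_def by auto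
  then have "a \<in> pm_carrier A" "b \<in> pm_carrier A"
    using ab by auto
  then have "pm_add A (pm_zero A) (pm_zero A) = pm_zero A"
    "pm_add A (pm_zero A) a = a" "pm_add A a (pm_zero A) = a"
    "pm_add A (pm_zero A) b = b" "pm_add A b (pm_zero A) = b"
    using assms(1) unfolding partial_magma_def by auto
  with sub ab show "pm_hom pm_one_generator (pm_sub (pm_square A) Rc R2)
      (\<lambda>n. (pm_element_hom A a n, pm_element_hom A b n))"
    unfolding pm_hom_def pm_one_generator_def pm_element_hom_def pm_sub_def
    by (auto simp: pm_square_def)
qed (auto simp: pm_hom_def pm_one_generator_def pm_element_hom_def pm_sub_def)

lemma equiv_if_pm_equivalence_relation:
  assumes A: "partial_magma A" and R: "pm_equivalence_relation A Rc R2"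
  shows "equiv (pm_carrier A) Rc"
proof -
  let ?hom = "pm_hom pm_one_generator A"
  let ?rel = "\<lambda>f g. pm_hom pm_one_generator (pm_sub (pm_square A) Rc R2) (\<lambda>x. (f x, g x))"
  have sub: "partial_submagma (pm_square A) Rc R2"
    and "hom_equiv_at pm_one_generator A Rc R2"
    using R partial_magma_one_generator unfolding pm_equivalence_relation_def by auto
  then have refl: "\<And>f. ?hom f \<Longrightarrow> ?rel f f"
    and sym: "\<And>f g. ?hom f \<Longrightarrow> ?hom g \<Longrightarrow> ?rel f g \<Longrightarrow> ?rel g f"
    and trans: "\<And>f g h. ?hom f \<Longrightarrow> ?hom g \<Longrightarrow> ?hom h \<Longrightarrow> ?rel f g \<Longrightarrow> ?rel g h \<Longrightarrow> ?rel f h"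
    unfolding hom_equiv_at_def Let_def by blast+
  have carrier: "Rc \<subseteq> pm_carrier A \<times> pm_carrier A"
    using sub unfolding partial_submagma_def pm_square_def by auto
  note hom = pm_hom_element_hom[OF A] and rel_iff = pm_hom_pair_element_hom_iff[OF A sub]
  show ?thesis
  proof (rule equivI[OF carrier])
    show "refl_on (pm_carrier A) Rc"
      using refl[OF hom] rel_iff by (auto simp: refl_on_def)
    show "Relation.sym Rc"
    proof (rule symI)
      fix a b assume ab: "(a, b) \<in> Rc"
      with carrier have "a \<in> pm_carrier A" "b \<in> pm_carrier A" by auto
      with ab show "(b, a) \<in> Rc"
        using sym[OF hom hom] rel_iff by blast
    qed
    show "Relation.trans Rc"
    proof (rule transI)
      fix a b c assume ab: "(a, b) \<in> Rc" and bc: "(b, c) \<in> Rc"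
      with carrier have "a \<in> pm_carrier A" "b \<in> pm_carrier A" "c \<in> pm_carrier A" by auto
      with ab bc show "(a, c) \<in> Rc"
        using trans[OF hom hom hom] rel_iff by blast
    qed
  qed
qed

definition pm_congruence :: "('a, 'm) pmagma_scheme \<Rightarrow> ('a \<times> 'a) set \<Rightarrow> bool" where
  "pm_congruence A R \<longleftrightarrow>
     equiv (pm_carrier A) R \<and>
     (\<forall>a c a' c'. (a, c) \<in> pm_sums A \<longrightarrow> (a', c') \<in> pm_sums A \<longrightarrow>
        (a, a') \<in> R \<longrightarrow> (c, c') \<in> R \<longrightarrow> (pm_add A a c, pm_add A a' c') \<in> R)"

definition pm_quotient :: "('a, 'm) pmagma_scheme \<Rightarrow> ('a \<times> 'a) set \<Rightarrow> 'a set pmagma" where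
  "pm_quotient A R =
     \<lparr> pm_carrier = pm_carrier A // R,
       pm_zero = R `` {pm_zero A},
       pm_sums = {(R `` {a}, R `` {c}) | a c. (a, c) \<in> pm_sums A},
       pm_add = (\<lambda>P Q. SOME S. \<exists>a c. (a, c) \<in> pm_sums A \<and> P = R `` {a} \<and> Q = R `` {c} \<and>
                                S = R `` {pm_add A a c}) \<rparr>"

lemma pm_add_quotient:
  assumes A: "partial_magma A" and R: "pm_congruence A R" and ac: "(a, c) \<in> pm_sums A"
  shows "pm_add (pm_quotient A R) (R `` {a}) (R `` {c}) = R `` {pm_add A a c}"
proof -
  let ?sum = "\<lambda>S. \<exists>a' c'. (a', c') \<in> pm_sums A \<and> R `` {a} = R `` {a'} \<and> R `` {c} = R `` {c'} \<and>
                         S = R `` {pm_add A a' c'}"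
  have equiv: "equiv (pm_carrier A) R"
    using R unfolding pm_congruence_def by blast
  from ac have "\<exists>S. ?sum S"
    by blast
  then have "?sum (SOME S. ?sum S)"
    by (rule someI_ex)
  then obtain a' c' where a'c': "(a', c') \<in> pm_sums A"
    and classes: "R `` {a} = R `` {a'}" "R `` {c} = R `` {c'}"
    and sum: "pm_add (pm_quotient A R) (R `` {a}) (R `` {c}) = R `` {pm_add A a' c'}"
    unfolding pm_quotient_def by auto
  have "(a, a') \<in> R" "(c, c') \<in> R"
    using classes ac a'c' A equiv_class_eq_iff[OF equiv] unfolding partial_magma_def by blast+
  then have "(pm_add A a c, pm_add A a' c') \<in> R"
    using R ac a'c' unfolding pm_congruence_def by blast
  then show ?thesis
    using sum equiv_class_eq_iff[OF equiv] by simp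
qed

lemma partial_magma_quotient:
  assumes A: "partial_magma A" and R: "pm_congruence A R"
  shows "partial_magma (pm_quotient A R)"
  unfolding partial_magma_def
proof (intro conjI ballI allI impI)
  have zero: "\<And>a. a \<in> pm_carrier A \<Longrightarrow> (pm_zero A, a) \<in> pm_sums A \<and> (a, pm_zero A) \<in> pm_sums A \<and>
      pm_add A a (pm_zero A) = a \<and> pm_add A (pm_zero A) a = a"
    and "\<And>a c. (a, c) \<in> pm_sums A \<Longrightarrow> a \<in> pm_carrier A \<and> c \<in> pm_carrier A \<and>
      (c, a) \<in> pm_sums A \<and> pm_add A a c = pm_add A c a \<and> pm_add A a c \<in> pm_carrier A"
    and "pm_zero A \<in> pm_carrier A"
    using A unfolding partial_magma_def by blast+
  then show "pm_zero (pm_quotient A R) \<in> pm_carrier (pm_quotient A R)"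
    and "pm_sums (pm_quotient A R) \<subseteq> pm_carrier (pm_quotient A R) \<times> pm_carrier (pm_quotient A R)"
    unfolding pm_quotient_def by (auto intro: quotientI)
  note add = pm_add_quotient[OF A R]
  fix P assume "P \<in> pm_carrier (pm_quotient A R)"
  then obtain a where a: "a \<in> pm_carrier A" "P = R `` {a}"
    unfolding pm_quotient_def by (auto elim: quotientE)
  then show "(pm_zero (pm_quotient A R), P) \<in> pm_sums (pm_quotient A R)"
    and "(P, pm_zero (pm_quotient A R)) \<in> pm_sums (pm_quotient A R)"
    and "pm_add (pm_quotient A R) P (pm_zero (pm_quotient A R)) = P"
    and "pm_add (pm_quotient A R) (pm_zero (pm_quotient A R)) P = P"
    using zero[OF a(1)] add[of a "pm_zero A"] add[of "pm_zero A" a]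
    by (auto simp: pm_quotient_def)
next
  fix P Q assume "(P, Q) \<in> pm_sums (pm_quotient A R)"
  then obtain a c where ac: "(a, c) \<in> pm_sums A" "P = R `` {a}" "Q = R `` {c}"
    unfolding pm_quotient_def by auto
  have "(c, a) \<in> pm_sums A" "pm_add A a c = pm_add A c a" "pm_add A a c \<in> pm_carrier A"
    using A ac(1) unfolding partial_magma_def by blast+
  then show "(Q, P) \<in> pm_sums (pm_quotient A R)"
    and "pm_add (pm_quotient A R) P Q = pm_add (pm_quotient A R) Q P"
    and "pm_add (pm_quotient A R) P Q \<in> pm_carrier (pm_quotient A R)"
    using ac pm_add_quotient[OF A R] by (auto simp: pm_quotient_def intro: quotientI)
qed

lemma pm_hom_quotient:
  assumes "partial_magma A" "pm_congruence A R"
  shows "pm_hom A (pm_quotient A R) (\<lambda>a. R `` {a})"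
  using pm_add_quotient[OF assms] unfolding pm_hom_def
  by (auto simp: pm_quotient_def intro: quotientI)

lemma effective_in_quotient:
  fixes A :: "('a, 'm) pmagma_scheme"
  assumes A: "partial_magma A" and R: "pm_congruence A R"
  shows "effective_in TYPE('a set) A R ((R \<times> R) \<inter> pm_sums (pm_square A))"
  unfolding effective_in_def
proof (intro exI conjI)
  show "partial_magma (pm_quotient A R)"
    using A R by (rule partial_magma_quotient)
  show "pm_hom A (pm_quotient A R) (\<lambda>a. R `` {a})"
    using A R by (rule pm_hom_quotient)
  have "equiv (pm_carrier A) R"
    using R unfolding pm_congruence_def by blast
  then show "R = {(a, a'). a \<in> pm_carrier A \<and> a' \<in> pm_carrier A \<and> R `` {a} = R `` {a'}}"
    using equiv_class_eq_iff[of "pm_carrier A" R] by blast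
qed auto

lemma pm_congruence_if_additive:
  assumes A: "partial_magma A" and R: "pm_equivalence_relation A Rc R2"
    and additive: "pm_additive A Rc R2"
  shows "pm_congruence A Rc"
  unfolding pm_congruence_def
proof (intro conjI allI impI)
  show "equiv (pm_carrier A) Rc"
    using A R by (rule equiv_if_pm_equivalence_relation)
  fix a c a' c'
  assume "(a, c) \<in> pm_sums A" "(a', c') \<in> pm_sums A" "(a, a') \<in> Rc" "(c, c') \<in> Rc"
  then have "((a, a'), (c, c')) \<in> R2"
    using additive unfolding pm_additive_def pm_square_def by auto
  moreover have "\<And>p q. (p, q) \<in> R2 \<Longrightarrow> pm_add (pm_square A) p q \<in> Rc"
    using R unfolding pm_equivalence_relation_def partial_submagma_def by blast
  ultimately show "(pm_add A a c, pm_add A a' c') \<in> Rc"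
    by (fastforce simp: pm_square_def)
qed

lemma pm_additive_if_effective_in:
  assumes "effective_in T A Rc R2"
  shows "pm_additive A Rc R2"
  using assms unfolding effective_in_def pm_additive_def by blast

theorem mainTheorem4:
  fixes A :: "'a pmagma"
    and Rc :: "('a \<times> 'a) set"
    and R2 :: "(('a \<times> 'a) \<times> ('a \<times> 'a)) set"
  assumes "partial_magma A"
    and "pm_equivalence_relation A Rc R2"
  shows "(pm_additive A Rc R2 \<longrightarrow> effective_in TYPE('a set) A Rc R2) \<and>
         (effective_in TYPE('b) A Rc R2 \<longrightarrow> pm_additive A Rc R2)"
proof (intro conjI impI)
  assume additive: "pm_additive A Rc R2"
  then have "pm_congruence A Rc"
    using assms by (blast intro: pm_congruence_if_additive)
  with assms(1) have "effective_in TYPE('a set) A Rc ((Rc \<times> Rc) \<inter> pm_sums (pm_square A))"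
    by (rule effective_in_quotient)
  with additive show "effective_in TYPE('a set) A Rc R2"
    unfolding pm_additive_def by simp
next
  show "effective_in TYPE('b) A Rc R2 \<Longrightarrow> pm_additive A Rc R2"
    by (rule pm_additive_if_effective_in)
qed

end
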